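(* For every $n\ge1$ and every $\sigma\in S_n(123)$ (permutations of $[n]$ with no increasing subsequence of length $3$), $\mu(\sigma)=L'(\lambda(\sigma))$.
   Context: Dyck path of semilength $n$: lattice path from $(0,0)$ to $(2n,0)$ with steps $U=(1,1)$, $D=(1,-1)$, never below the $x$-axis. A return is a down step ending on the $x$-axis; a Dyck path is irreducible if it has exactly one return; every Dyck path $P$ factors uniquely as $P=P_1\cdots P_r$ with each $P_i$ irreducible (its irreducible components). If $P$ has ascents (maximal runs of $U$) of lengths $a_1,\dots,a_k$ and descents of lengths $d_1,\dots,d_k$ (left to right), with $A_i=a_1+\dots+a_i$, $D_i=d_1+\dots+d_i$, its ascent-descent code is $(A,D)$ with $A=A_1,\dots,A_{k-1}$, $D=D_1,\dots,D_{k-1}$; this determines $P$. $P$ is irreducible iff $A_i>D_i$ for all $i$. The map $L'$: for an irreducible path $P$ of semilength $n$ with code $A=A_1,\dots,A_h$, $D=D_1,\dots,D_h$, let $\{\hat A_1>\dots>\hat A_{n-2-h}\}=\{1,\dots,n-2\}\setminus\{A_1-1,\dots,A_h-1\}$ and $\{\hat D_1>\dots>\hat D_{n-2-h}\}=\{1,\dots,n-2\}\setminus\{D_1,\dots,D_h\}$; $L'(P)$ is the (irreducible) Dyck path of semilength $n$ with code $A'_i=n-\hat A_i$, $D'_i=n-1-\hat D_i$. For a general Dyck path with irreducible components $P_1\cdots P_r$, $L'(P_1\cdots P_r)=L'(P_r)\cdots L'(P_1)$; $L'$ of the empty path is empty. (This is the paper's variant of the Kreweras–Lalanne involution: reflect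 $P$ in a vertical line and replace each irreducible component $UXD$ by $U\,L(X)\,D$, $L$ the Kreweras–Lalanne involution.) For $\sigma=x_1\cdots x_n$: $x_i$ is a left-to-right (LTR) minimum if $x_i<x_j$ for all $j<i$; $x_i$ is a right-to-left (RTL) maximum if $x_i>x_j$ for all $j>i$. $\lambda(\sigma)$: write $\sigma=m_1w_1\cdots m_kw_k$ with $m_1>\dots>m_k$ the LTR minima and $w_i$ possibly empty words, $m_0=n+1$; $\lambda(\sigma)=U^{m_0-m_1}D^{|w_1|+1}\cdots U^{m_{k-1}-m_k}D^{|w_k|+1}$. $\mu(\sigma)$: write $\sigma=u_hM_h\cdots u_1M_1$ with $M_1<\dots<M_h$ the RTL maxima and $u_i$ possibly empty words, $M_0=0$; $\mu(\sigma)=U^{M_1-M_0}D^{|u_1|+1}U^{M_2-M_1}D^{|u_2|+1}\cdots U^{M_h-M_{h-1}}D^{|u_h|+1}$. *)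

theory Defs
  imports Main "HOL-Combinatorics.Multiset_Permutations"
begin

text \<open>Lattice-path steps: U = (1,1), D = (1,-1). A path is a list of steps.\<close>
datatype step = U | D

definition cnt :: "step \<Rightarrow> step list \<Rightarrow> nat" where
  "cnt s P = length (filter (\<lambda>t. t = s) P)"

definition dyck :: "step list \<Rightarrow> bool" where
  "dyck P \<longleftrightarrow> cnt U P = cnt D P \<and> (\<forall>k \<le> length P. cnt D (take k P) \<le> cnt U (take k P))"

text \<open>The ascent-descent code (A,D): A_i (resp. D_i) is the number
  of U (resp. D) steps before the i-th valley is left, i.e. a_1+...+a_i (resp. d_1+...+d_i).\<close>
definition valleys :: "step list \<Rightarrow> nat list" where
  "valleys P = filter (\<lambda>j. P ! j = D \<and> P ! (j+1) = U) [0..<length P - 1]"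

definition codeA :: "step list \<Rightarrow> nat list" where
  "codeA P = map (\<lambda>j. cnt U (take (j+1) P)) (valleys P)"

definition codeD :: "step list \<Rightarrow> nat list" where
  "codeD P = map (\<lambda>j. cnt D (take (j+1) P)) (valleys P)"

definition path_of_code :: "nat \<Rightarrow> nat list \<Rightarrow> nat list \<Rightarrow> step list" where
  "path_of_code n A Ds =
     (let As = 0 # A @ [n]; Dss = 0 # Ds @ [n] in
      concat (map (\<lambda>i. replicate (As ! (i+1) - As ! i) U @ replicate (Dss ! (i+1) - Dss ! i) D)
                  [0..<length A + 1]))"

text \<open>Returns: down steps ending on the x-axis (recorded as the length of the prefix ending there).
  Irreducible components: the factors between consecutive returns.\<close>
definition returns :: "step list \<Rightarrow> nat list" where
  "returns P = map (\<lambda>j. j+1)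
     (filter (\<lambda>j. P ! j = D \<and> cnt U (take (j+1) P) = cnt D (take (j+1) P)) [0..<length P])"

definition irreducible :: "step list \<Rightarrow> bool" where
  "irreducible P \<longleftrightarrow> dyck P \<and> length (returns P) = 1"

definition components :: "step list \<Rightarrow> step list list" where
  "components P = (let bs = 0 # returns P in
     map (\<lambda>i. drop (bs ! i) (take (bs ! (i+1)) P)) [0..<length (returns P)])"

definition Lirr :: "step list \<Rightarrow> step list" where
  "Lirr P = (let n = length P div 2; A = codeA P; Ds = codeD P;
      Ahat = rev (sorted_list_of_set ({1..n-2} - (\<lambda>a. a - 1) ` set A));
      Dhat = rev (sorted_list_of_set ({1..n-2} - set Ds))
    in path_of_code n (map (\<lambda>x. n - x) Ahat) (map (\<lambda>x. n - 1 - x) Dhat))"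

definition Lprime :: "step list \<Rightarrow> step list" where
  "Lprime P = concat (rev (map Lirr (components P)))"

fun lam_aux :: "nat \<Rightarrow> nat list \<Rightarrow> step list" where
  "lam_aux m [] = []"
| "lam_aux m (x # xs) =
     (if x < m then replicate (m - x) U @ [D] @ lam_aux x xs else D # lam_aux m xs)"

definition lam :: "nat list \<Rightarrow> step list" where
  "lam \<sigma> = lam_aux (length \<sigma> + 1) \<sigma>"

fun mu_aux :: "nat \<Rightarrow> nat list \<Rightarrow> step list" where
  "mu_aux m [] = []"
| "mu_aux m (x # xs) =
     (if m < x then replicate (x - m) U @ [D] @ mu_aux x xs else D # mu_aux m xs)"

definition mu :: "nat list \<Rightarrow> step list" where
  "mu \<sigma> = mu_aux 0 (rev \<sigma>)"

definition avoids123 :: "nat list \<Rightarrow> bool" where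
  "avoids123 \<sigma> \<longleftrightarrow>
     \<not> (\<exists>i j k. i < j \<and> j < k \<and> k < length \<sigma> \<and> \<sigma> ! i < \<sigma> ! j \<and> \<sigma> ! j < \<sigma> ! k)"

end

theory Submission
  imports Defs
begin

text \<open>Reversing and complementing \<open>\<sigma>\<close> turns its RTL maxima into LTR minima, so
  \<open>\<mu> \<sigma> = \<lambda> (rev_compl \<sigma>)\<close>. Cut \<open>\<sigma>\<close> into blocks, each the shortest prefix of the
  remainder consisting of its largest values: \<open>\<lambda>\<close> sends the blocks to the irreducible
  components of \<open>\<lambda> \<sigma>\<close>, and \<open>rev_compl\<close> reverses their order, just as \<open>L'\<close> does. So it
  suffices to treat an indecomposable 123-avoiding \<open>\<sigma>\<close> of length \<open>k\<close>, in which every entry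
  is either an LTR minimum or an RTL maximum, but not both. The ascent-descent code of
  \<open>\<lambda> \<sigma>\<close> records the positions and values of the LTR minima; complementing both inside
  \<open>{1..k-2}\<close>, as \<open>L'\<close> does, yields the positions and values of the RTL maxima, which form
  the code of \<open>\<lambda> (rev_compl \<sigma>)\<close>.\<close>

section \<open>Step counts, ascent-descent codes and reconstruction\<close>

lemma cnt_Nil [simp]: "cnt s [] = 0"
  by (simp add: cnt_def)

lemma cnt_Cons [simp]: "cnt s (x # P) = (if x = s then 1 else 0) + cnt s P"
  by (simp add: cnt_def)

lemma cnt_append [simp]: "cnt s (P @ Q) = cnt s P + cnt s Q"
  by (simp add: cnt_def)

lemma cnt_replicate [simp]: "cnt s (replicate k t) = (if t = s then k else 0)"
  by (induction k) auto

lemma length_eq_cnt_U_plus_cnt_D: "length P = cnt U P + cnt D P"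
  by (induction P) (auto intro: step.exhaust)

lemma upt_length_Cons: "[0..<length (x # P)] = 0 # map Suc [0..<length P]"
  by (simp add: map_Suc_upt upt_conv_Cons del: upt_Suc)

lemma valleys_Cons:
  "valleys (x # P) = (if x = D \<and> P \<noteq> [] \<and> hd P = U then [0] else []) @ map Suc (valleys P)"
proof (cases P)
  case (Cons y P')
  have "valleys (x # P) = filter (\<lambda>j. (x # P) ! j = D \<and> (x # P) ! (j + 1) = U) [0..<length P]"
    by (simp add: valleys_def)
  also have "\<dots> = (if x = D \<and> hd P = U then [0] else []) @ map Suc (valleys P)"
    using upt_length_Cons[of y P'] by (simp add: Cons valleys_def filter_map o_def)
  finally show ?thesis
    using Cons by simp
qed (simp add: valleys_def)

lemma codeA_Cons:
  "codeA (x # P) = (if x = D \<and> P \<noteq> [] \<and> hd P = U then [0] else [])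
     @ map (\<lambda>v. v + (if x = U then 1 else 0)) (codeA P)"
  by (simp add: codeA_def valleys_Cons o_def)

lemma codeD_Cons:
  "codeD (x # P) = (if x = D \<and> P \<noteq> [] \<and> hd P = U then [1] else [])
     @ map (\<lambda>v. v + (if x = D then 1 else 0)) (codeD P)"
  by (simp add: codeD_def valleys_Cons o_def)

lemma codeA_replicate_U_append: "codeA (replicate a U @ Q) = map (\<lambda>v. v + a) (codeA Q)"
  by (induction a) (auto simp: codeA_Cons o_def)

lemma codeD_replicate_U_append: "codeD (replicate a U @ Q) = codeD Q"
  by (induction a) (auto simp: codeD_Cons)

lemma codeA_replicate_D_append:
  "b \<ge> 1 \<Longrightarrow> codeA (replicate b D @ Q) = (if Q \<noteq> [] \<and> hd Q = U then [0] else []) @ codeA Q"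
  by (induction b rule: dec_induct) (auto simp: codeA_Cons)

lemma codeD_replicate_D_append:
  "b \<ge> 1 \<Longrightarrow> codeD (replicate b D @ Q) =
     (if Q \<noteq> [] \<and> hd Q = U then [b] else []) @ map (\<lambda>v. v + b) (codeD Q)"
  by (induction b rule: dec_induct) (auto simp: codeD_Cons o_def)

lemma codeA_pos: "P \<noteq> [] \<Longrightarrow> hd P = U \<Longrightarrow> v \<in> set (codeA P) \<Longrightarrow> v > 0"
  by (cases P) (auto simp: codeA_def)

lemma codeD_pos: "v \<in> set (codeD P) \<Longrightarrow> v > 0"
proof -
  assume "v \<in> set (codeD P)"
  then obtain j where "j \<in> set (valleys P)" and v: "v = cnt D (take (j + 1) P)"
    by (auto simp: codeD_def)
  then have "D \<in> set (take (j + 1) P)"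
    by (auto simp: valleys_def in_set_conv_nth intro!: exI[of _ j])
  then show ?thesis
    unfolding v cnt_def by (auto simp: filter_empty_conv)
qed

lemma sorted_wrt_codeA: "sorted_wrt (<) (codeA P)"
proof (induction P)
  case (Cons x P)
  then have shifted: "sorted_wrt (<) (map (\<lambda>v. v + c) (codeA P))" for c
    by (simp add: sorted_wrt_map)
  show ?case
  proof (cases "x = D \<and> P \<noteq> [] \<and> hd P = U")
    case True
    then show ?thesis
      using shifted[of 0] codeA_pos[of P] by (simp add: codeA_Cons)
  qed (use shifted in \<open>auto simp: codeA_Cons\<close>)
qed (simp add: codeA_def valleys_def)

lemma sorted_wrt_codeD: "sorted_wrt (<) (codeD P)"
proof (induction P)
  case (Cons x P)
  then have shifted: "sorted_wrt (<) (map (\<lambda>v. v + c) (codeD P))" for c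
    by (simp add: sorted_wrt_map)
  show ?case
  proof (cases "x = D \<and> P \<noteq> [] \<and> hd P = U")
    case True
    then show ?thesis
      using shifted[of 1] codeD_pos[of _ P] by (auto simp: codeD_Cons)
  qed (use shifted in \<open>auto simp: codeD_Cons\<close>)
qed (simp add: codeD_def valleys_def)

text \<open>\<open>code_path a d a' d' A Ds\<close> is the path with ascent-descent code \<open>(A, Ds)\<close> that
  starts after \<open>a\<close> up steps and \<open>d\<close> down steps and ends after \<open>a'\<close> and \<open>d'\<close>.\<close>
fun code_path :: "nat \<Rightarrow> nat \<Rightarrow> nat \<Rightarrow> nat \<Rightarrow> nat list \<Rightarrow> nat list \<Rightarrow> step list" where
  "code_path a d a' d' [] [] = replicate (a' - a) U @ replicate (d' - d) D"
| "code_path a d a' d' (x # A) (y # Ds) =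
     replicate (x - a) U @ replicate (y - d) D @ code_path x y a' d' A Ds"
| "code_path a d a' d' _ _ = []"

lemma concat_blocks_eq_code_path:
  "length A = length Ds \<Longrightarrow>
   concat (map (\<lambda>i. replicate ((a # A @ [a']) ! (i + 1) - (a # A @ [a']) ! i) U @
                    replicate ((d # Ds @ [d']) ! (i + 1) - (d # Ds @ [d']) ! i) D)
     [0..<length A + 1])
   = code_path a d a' d' A Ds"
proof (induction A arbitrary: a d Ds)
  case (Cons x A)
  then obtain y Ds' where Ds: "Ds = y # Ds'"
    by (cases Ds) auto
  have "[0..<length (x # A) + 1] = 0 # map Suc [0..<length A + 1]"
    by (simp add: map_Suc_upt upt_conv_Cons del: upt_Suc)
  then show ?case
    using Cons.IH[of Ds' x y] Cons.prems by (simp add: Ds o_def)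
qed simp

lemma path_of_code_eq_code_path:
  "length A = length Ds \<Longrightarrow> path_of_code n A Ds = code_path 0 0 n n A Ds"
  unfolding path_of_code_def Let_def by (rule concat_blocks_eq_code_path)

lemma split_first_peak:
  assumes "P \<noteq> []" "last P = D"
  obtains a b P' where "P = replicate a U @ replicate b D @ P'" "b \<ge> 1" "P' \<noteq> [] \<Longrightarrow> hd P' = U"
proof -
  define R where "R = dropWhile (\<lambda>s. s = U) P"
  define P' where "P' = dropWhile (\<lambda>s. s = D) R"
  have PR: "P = replicate (length (takeWhile (\<lambda>s. s = U) P)) U @ R"
    unfolding R_def by (metis (mono_tags) replicate_length_same set_takeWhileD takeWhile_dropWhile_id)
  have RP': "R = replicate (length (takeWhile (\<lambda>s. s = D) R)) D @ P'"
    unfolding P'_def by (metis (mono_tags) replicate_length_same set_takeWhileD takeWhile_dropWhile_id)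
  have "R \<noteq> []"
  proof
    assume "R = []"
    then have "last P \<in> {U}"
      using PR last_in_set[OF assms(1)] by (metis append_Nil2 empty_iff insert_iff set_replicate_conv_if)
    with assms(2) show False
      by simp
  qed
  then have "hd R = D"
    unfolding R_def by (metis (full_types) hd_dropWhile step.exhaust)
  with \<open>R \<noteq> []\<close> have "length (takeWhile (\<lambda>s. s = D) R) \<ge> 1"
    by (cases R) auto
  moreover have "hd P' = U" if "P' \<noteq> []"
    using that unfolding P'_def by (metis (full_types) hd_dropWhile step.exhaust)
  ultimately show thesis
    using that PR RP' by (metis append.assoc)
qed

lemma code_path_codes:
  "P = [] \<or> last P = D \<Longrightarrow>
   code_path a d (a + cnt U P) (d + cnt D P)
     (map (\<lambda>v. v + a) (codeA P)) (map (\<lambda>v. v + d) (codeD P)) = P"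
proof (induction "length P" arbitrary: P a d rule: less_induct)
  case less
  show ?case
  proof (cases "P = []")
    case True
    then show ?thesis
      by (simp add: codeA_def codeD_def valleys_def)
  next
    case False
    moreover have "last P = D"
      using less.prems False by simp
    ultimately obtain x y P' where P: "P = replicate x U @ replicate y D @ P'"
      and y: "y \<ge> 1" and hd: "P' \<noteq> [] \<Longrightarrow> hd P' = U"
      using split_first_peak by blast
    have codes: "codeA P = (if P' = [] then [] else x # map (\<lambda>v. v + x) (codeA P'))"
      "codeD P = (if P' = [] then [] else y # map (\<lambda>v. v + y) (codeD P'))"
      using hd unfolding P codeA_replicate_U_append codeD_replicate_U_append
        codeA_replicate_D_append[OF y] codeD_replicate_D_append[OF y]
      by (auto simp: codeA_def codeD_def valleys_def)
    show ?thesis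
    proof (cases "P' = []")
      case False
      have "P' = [] \<or> last P' = D" "length P' < length P"
        using less.prems P y False by (auto simp: last_append)
      from less.hyps[OF this(2) this(1), of "a + x" "d + y"] False show ?thesis
        unfolding codes by (simp add: P o_def ac_simps)
    qed (unfold codes, simp add: P)
  qed
qed

lemma path_of_code_codes:
  "P \<noteq> [] \<Longrightarrow> last P = D \<Longrightarrow> cnt U P = n \<Longrightarrow> cnt D P = n \<Longrightarrow>
   path_of_code n (codeA P) (codeD P) = P"
  using code_path_codes[of P 0 0] path_of_code_eq_code_path[of "codeA P" "codeD P"]
  by (simp add: codeA_def codeD_def)

section \<open>Returns and irreducible components\<close>

definition returns_from :: "int \<Rightarrow> step list \<Rightarrow> nat list" where
  "returns_from h P = map (\<lambda>j. j + 1)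
     (filter (\<lambda>j. P ! j = D \<and> h + int (cnt U (take (j + 1) P)) - int (cnt D (take (j + 1) P)) = 0)
       [0..<length P])"

lemma returns_eq_returns_from: "returns P = returns_from 0 P"
  unfolding returns_def returns_from_def by simp

lemma returns_from_Nil [simp]: "returns_from h [] = []"
  by (simp add: returns_from_def)

lemma returns_from_Cons:
  "returns_from h (x # P) =
     (if x = D \<and> h = 1 then [1] else []) @ map Suc (returns_from (h + (if x = U then 1 else -1)) P)"
  unfolding returns_from_def upt_length_Cons by (cases x) (auto simp: filter_map o_def algebra_simps)

lemma returns_from_append:
  "returns_from h (Q @ R) =
     returns_from h Q @ map (\<lambda>j. j + length Q) (returns_from (h + int (cnt U Q) - int (cnt D Q)) R)"
proof (induction Q arbitrary: h)
  case (Cons x Q)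
  show ?case
    unfolding append_Cons returns_from_Cons Cons.IH by (cases x) (auto simp: o_def algebra_simps)
qed simp

lemma returns_from_replicate_U_append:
  "returns_from h (replicate a U @ Q) = map (\<lambda>j. j + a) (returns_from (h + int a) Q)"
  by (induction a arbitrary: h) (auto simp: returns_from_Cons o_def algebra_simps)

lemma components_append:
  assumes "returns (Q @ R) = length Q # map (\<lambda>j. j + length Q) (returns R)"
  shows "components (Q @ R) = Q # components R"
proof -
  define rs where "rs = returns R"
  define bs where "bs = 0 # length Q # map (\<lambda>j. j + length Q) rs"
  have bs_Suc: "bs ! Suc i = (0 # rs) ! i + length Q" if "i \<le> length rs" for i
    using that by (cases i) (auto simp: bs_def)
  have upt: "[0..<length (returns (Q @ R))] = 0 # map Suc [0..<length rs]"
    using assms by (simp add: rs_def map_Suc_upt upt_conv_Cons del: upt_Suc)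
  have "components (Q @ R) = Q # map (\<lambda>i. drop (bs ! Suc i) (take (bs ! Suc (Suc i)) (Q @ R))) [0..<length rs]"
    unfolding components_def Let_def upt using assms by (simp add: bs_def rs_def o_def)
  also have "\<dots> = Q # map (\<lambda>i. drop ((0 # rs) ! i) (take ((0 # rs) ! Suc i) R)) [0..<length rs]"
    using bs_Suc by (simp add: take_append drop_append)
  also have "\<dots> = Q # components R"
    unfolding components_def Let_def rs_def by simp
  finally show ?thesis .
qed

lemma Lprime_append:
  assumes "returns Q = [length Q]" "cnt U Q = cnt D Q"
  shows "Lprime (Q @ R) = Lprime R @ Lirr Q"
proof -
  have "returns (Q @ R) = length Q # map (\<lambda>j. j + length Q) (returns R)"
    using assms unfolding returns_eq_returns_from returns_from_append by simp
  then show ?thesis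
    unfolding Lprime_def components_append[OF \<open>returns (Q @ R) = _\<close>] by simp
qed

section \<open>The path \<open>\<lambda>\<close> and its codes\<close>

definition run_min :: "nat \<Rightarrow> nat list \<Rightarrow> nat" where
  "run_min m xs = foldl min m xs"

lemma run_min_Nil [simp]: "run_min m [] = m"
  by (simp add: run_min_def)

lemma run_min_Cons [simp]: "run_min m (x # xs) = run_min (min m x) xs"
  by (simp add: run_min_def)

lemma run_min_le: "run_min m xs \<le> m"
  by (induction xs arbitrary: m) (auto, meson le_trans min.cobounded1)

lemma run_min_eq: "run_min m xs = (if xs = [] then m else min m (Min (set xs)))"
proof (induction xs arbitrary: m)
  case (Cons x xs)
  then show ?case
    by (cases "xs = []") (auto simp: min.assoc)
qed simp

lemma run_min_shift: "run_min (m + c) (map (\<lambda>x. x + c) xs) = run_min m xs + c"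
  by (induction xs arbitrary: m) (auto simp: min_def)

lemma lam_aux_Cons_eq: "lam_aux m (x # xs) = replicate (m - min m x) U @ D # lam_aux (min m x) xs"
  by (auto simp: min_def)

lemma lam_aux_append: "lam_aux m (xs @ ys) = lam_aux m xs @ lam_aux (run_min m xs) ys"
  by (induction xs arbitrary: m) (simp_all add: lam_aux_Cons_eq)

lemma lam_aux_shift: "lam_aux (m + c) (map (\<lambda>x. x + c) xs) = lam_aux m xs"
  by (induction xs arbitrary: m) auto

lemma cnt_U_lam_aux: "cnt U (lam_aux m xs) = m - run_min m xs"
proof (induction xs arbitrary: m)
  case (Cons x xs)
  then show ?case
    using run_min_le[of "min m x" xs] by (simp add: lam_aux_Cons_eq del: lam_aux.simps)
qed simp

lemma cnt_D_lam_aux: "cnt D (lam_aux m xs) = length xs"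
  by (induction xs arbitrary: m) (simp_all add: lam_aux_Cons_eq)

lemma lam_aux_eq_Nil_iff: "lam_aux m xs = [] \<longleftrightarrow> xs = []"
  by (cases xs) (auto simp: lam_aux_Cons_eq)

lemma last_lam_aux: "xs \<noteq> [] \<Longrightarrow> last (lam_aux m xs) = D"
  by (induction xs arbitrary: m)
    (auto simp: lam_aux_Cons_eq lam_aux_eq_Nil_iff last_append simp del: lam_aux.simps)

lemma hd_lam_aux_eq_U_iff: "lam_aux m xs \<noteq> [] \<and> hd (lam_aux m xs) = U \<longleftrightarrow> xs \<noteq> [] \<and> hd xs < m"
  by (cases xs) (auto simp: lam_aux_Cons_eq)

text \<open>Reading \<open>\<sigma>\<close> backwards and complementing its values turns RTL maxima into LTR minima.\<close>
lemma mu_aux_eq_lam_aux: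
  "\<forall>x\<in>set ys. x \<le> N \<Longrightarrow> m \<le> N \<Longrightarrow> mu_aux m ys = lam_aux (Suc N - m) (map (\<lambda>x. Suc N - x) ys)"
  by (induction ys arbitrary: m) auto

lemma indices_split_first:
  "{f i | i. 0 < i \<and> i < Suc L \<and> Q i} =
   (if 0 < L \<and> Q 1 then {f 1} else {}) \<union> {f (Suc j) | j. 0 < j \<and> j < L \<and> Q (Suc j)}"
  (is "?l = ?r")
proof
  show "?l \<subseteq> ?r"
  proof
    fix v
    assume "v \<in> ?l"
    then obtain i where i: "v = f i" "0 < i" "i < Suc L" "Q i"
      by blast
    then show "v \<in> ?r"
      by (cases "i = 1") (auto simp: gr0_conv_Suc)
  qed
qed (auto split: if_splits)

text \<open>The valleys of \<open>\<lambda>\<close> sit right before the entries that are new running minima.\<close>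
lemma set_codeA_lam_aux:
  "set (codeA (lam_aux m xs)) =
     {m - run_min m (take i xs) | i. 0 < i \<and> i < length xs \<and> xs ! i < run_min m (take i xs)}"
proof (induction xs arbitrary: m)
  case (Cons x xs)
  define m' where "m' = min m x"
  define a where "a = m - m'"
  define L where "L = lam_aux m' xs"
  have valley: "(L \<noteq> [] \<and> hd L = U) \<longleftrightarrow> (0 < length xs \<and> xs ! 0 < m')"
    unfolding L_def hd_lam_aux_eq_U_iff by (cases xs) auto
  have "lam_aux m (x # xs) = replicate a U @ replicate 1 D @ L"
    by (simp add: lam_aux_Cons_eq a_def m'_def L_def)
  then have "set (codeA (lam_aux m (x # xs))) =
      (\<lambda>v. v + a) ` ((if 0 < length xs \<and> xs ! 0 < m' then {0} else {}) \<union> set (codeA L))"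
    using codeA_replicate_U_append codeA_replicate_D_append[of 1 L] valley by auto
  also have "\<dots> = (if 0 < length xs \<and> xs ! 0 < m' then {a} else {}) \<union>
      (\<lambda>v. v + a) ` {m' - run_min m' (take j xs) | j. 0 < j \<and> j < length xs \<and> xs ! j < run_min m' (take j xs)}"
    unfolding L_def Cons.IH by auto
  also have "\<dots> = (if 0 < length xs \<and> xs ! 0 < m' then {a} else {}) \<union>
      {m - run_min m' (take j xs) | j. 0 < j \<and> j < length xs \<and> xs ! j < run_min m' (take j xs)}"
  proof -
    have "m - run_min m' t = (m' - run_min m' t) + a" for t
      using run_min_le[of m' t] by (simp add: a_def m'_def)
    then show ?thesis
      by (auto simp: image_def)
  qed
  also have "\<dots> = {m - run_min m (take i (x # xs)) | i.
      0 < i \<and> i < length (x # xs) \<and> (x # xs) ! i < run_min m (take i (x # xs))}"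
    using indices_split_first[of "\<lambda>i. m - run_min m (take i (x # xs))" "length xs"
        "\<lambda>i. (x # xs) ! i < run_min m (take i (x # xs))"]
    by (simp add: m'_def a_def)
  finally show ?case .
qed (simp add: codeA_def valleys_def)

lemma set_codeD_lam_aux:
  "set (codeD (lam_aux m xs)) = {i. 0 < i \<and> i < length xs \<and> xs ! i < run_min m (take i xs)}"
proof (induction xs arbitrary: m)
  case (Cons x xs)
  define m' where "m' = min m x"
  define L where "L = lam_aux m' xs"
  have valley: "(L \<noteq> [] \<and> hd L = U) \<longleftrightarrow> (0 < length xs \<and> xs ! 0 < m')"
    unfolding L_def hd_lam_aux_eq_U_iff by (cases xs) auto
  have "lam_aux m (x # xs) = replicate (m - m') U @ replicate 1 D @ L"
    by (simp add: lam_aux_Cons_eq m'_def L_def)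
  then have "set (codeD (lam_aux m (x # xs))) =
      (if 0 < length xs \<and> xs ! 0 < m' then {1} else {}) \<union> Suc ` set (codeD L)"
    using codeD_replicate_U_append codeD_replicate_D_append[of 1 L] valley by auto
  also have "\<dots> = (if 0 < length xs \<and> xs ! 0 < m' then {1} else {}) \<union>
      Suc ` {j. 0 < j \<and> j < length xs \<and> xs ! j < run_min m' (take j xs)}"
    unfolding L_def Cons.IH ..
  also have "\<dots> = {i. 0 < i \<and> i < length (x # xs) \<and> (x # xs) ! i < run_min m (take i (x # xs))}"
    using indices_split_first[of id "length xs" "\<lambda>i. (x # xs) ! i < run_min m (take i (x # xs))"]
    by (auto simp: m'_def image_def)
  finally show ?case .
qed (simp add: codeD_def valleys_def)

text \<open>After the \<open>i\<close>-th entry the height is the drop of the running minimum minus \<open>i\<close>.\<close>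
lemma set_returns_from_lam_aux:
  "set (returns_from h (lam_aux m xs)) =
     {length (lam_aux m (take i xs)) | i. 0 < i \<and> i \<le> length xs \<and>
        h + int m - int (run_min m (take i xs)) - int i = 0}"
proof (induction xs arbitrary: m h)
  case (Cons x xs)
  define m' where "m' = min m x"
  define a where "a = m - m'"
  have m'_le: "m' \<le> m"
    by (simp add: m'_def)
  have "lam_aux m (x # xs) = replicate a U @ D # lam_aux m' xs"
    by (simp add: lam_aux_Cons_eq a_def m'_def)
  then have "set (returns_from h (lam_aux m (x # xs))) = (if h + int a = 1 then {a + 1} else {}) \<union>
      (\<lambda>v. v + (a + 1)) ` set (returns_from (h + int a - 1) (lam_aux m' xs))"
    by (auto simp: returns_from_replicate_U_append returns_from_Cons image_def)
  also have "\<dots> = (if h + int a = 1 then {a + 1} else {}) \<union>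
      (\<lambda>v. v + (a + 1)) ` {length (lam_aux m' (take j xs)) | j. 0 < j \<and> j \<le> length xs \<and>
        (h + int a - 1) + int m' - int (run_min m' (take j xs)) - int j = 0}"
    unfolding Cons.IH ..
  also have "\<dots> = (if h + int a = 1 then {a + 1} else {}) \<union>
      {length (lam_aux m (take (Suc j) (x # xs))) | j. 0 < j \<and> j < Suc (length xs) \<and>
        h + int m - int (run_min m (take (Suc j) (x # xs))) - int (Suc j) = 0}"
  proof -
    have "length (lam_aux m (take (Suc j) (x # xs))) = length (lam_aux m' (take j xs)) + (a + 1)" for j
      by (simp add: lam_aux_Cons_eq a_def m'_def del: lam_aux.simps)
    moreover have "(h + int m - int (run_min m (take (Suc j) (x # xs))) - int (Suc j) = 0) \<longleftrightarrow>
        ((h + int a - 1) + int m' - int (run_min m' (take j xs)) - int j = 0)" for j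
      using m'_le run_min_le[of m' "take j xs"] by (simp add: a_def m'_def of_nat_diff; linarith)
    ultimately show ?thesis
      by (auto simp: image_def less_Suc_eq_le)
  qed
  also have "\<dots> = {length (lam_aux m (take i (x # xs))) | i. 0 < i \<and> i \<le> length (x # xs) \<and>
      h + int m - int (run_min m (take i (x # xs))) - int i = 0}"
    using indices_split_first[of "\<lambda>i. length (lam_aux m (take i (x # xs)))" "Suc (length xs)"
        "\<lambda>i. h + int m - int (run_min m (take i (x # xs))) - int i = 0"]
      m'_le lam_aux.simps(1)[of m']
    by (simp add: m'_def a_def lam_aux_Cons_eq less_Suc_eq_le of_nat_diff del: lam_aux.simps)
  finally show ?case .
qed simp

section \<open>Left-to-right minima and right-to-left maxima of permutations\<close>

definition is_perm :: "nat list \<Rightarrow> nat \<Rightarrow> bool" where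
  "is_perm t k \<longleftrightarrow> t \<in> permutations_of_set {1..k}"

lemma is_perm_iff: "is_perm t k \<longleftrightarrow> distinct t \<and> set t = {1..k} \<and> length t = k"
  unfolding is_perm_def permutations_of_set_def using distinct_card by fastforce

definition ltrmin :: "nat list \<Rightarrow> nat \<Rightarrow> bool" where
  "ltrmin t p \<longleftrightarrow> (\<forall>j<p. t ! p < t ! j)"

definition rtlmax :: "nat list \<Rightarrow> nat \<Rightarrow> bool" where
  "rtlmax t p \<longleftrightarrow> (\<forall>j. p < j \<and> j < length t \<longrightarrow> t ! j < t ! p)"

definition ltr_min_values :: "nat list \<Rightarrow> nat \<Rightarrow> nat set" where
  "ltr_min_values t k = {t ! p | p. p < k \<and> ltrmin t p}"

definition rtl_max_values :: "nat list \<Rightarrow> nat \<Rightarrow> nat set" where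
  "rtl_max_values t k = {t ! p | p. p < k \<and> rtlmax t p}"

text \<open>Exchanges RTL maxima and LTR minima, so that \<open>\<mu> \<sigma> = \<lambda> (rev_compl \<sigma>)\<close>.\<close>
definition rev_compl :: "nat list \<Rightarrow> nat list" where
  "rev_compl t = map (\<lambda>x. Suc (length t) - x) (rev t)"

text \<open>No proper nonempty prefix consists of the largest values. These are the permutations
  whose path \<open>\<lambda>\<close> is irreducible.\<close>
definition indecomposable :: "nat list \<Rightarrow> bool" where
  "indecomposable t \<longleftrightarrow>
     (\<forall>j. 0 < j \<and> j < length t \<longrightarrow> set (take j t) \<noteq> {length t - j + 1..length t})"

lemma set_take_conv_nth: "i \<le> length t \<Longrightarrow> set (take i t) = {t ! j | j. j < i}"
  by (auto simp flip: nth_image)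

lemma run_min_take_eq_Min:
  assumes "\<forall>x\<in>set t. x < M" "0 < i" "i \<le> length t"
  shows "run_min M (take i t) = Min (set (take i t))"
proof -
  have "take i t \<noteq> []"
    using assms(2,3) by auto
  then have "Min (set (take i t)) \<in> set (take i t)"
    by simp
  then have "Min (set (take i t)) \<in> set t"
    by (rule in_set_takeD)
  with \<open>take i t \<noteq> []\<close> show ?thesis
    using assms(1) by (simp add: run_min_eq)
qed

lemma nth_lt_run_min_iff_ltrmin:
  assumes "\<forall>x\<in>set t. x < M" "0 < i" "i < length t"
  shows "t ! i < run_min M (take i t) \<longleftrightarrow> ltrmin t i"
proof -
  have "t ! i < run_min M (take i t) \<longleftrightarrow> (\<forall>y\<in>set (take i t). t ! i < y)"
  proof -
    have "set (take i t) \<noteq> {}"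
      using assms(2,3) by auto
    then show ?thesis
      using run_min_take_eq_Min[OF assms(1,2)] assms(3) by simp
  qed
  also have "\<dots> \<longleftrightarrow> ltrmin t i"
    unfolding ltrmin_def set_take_conv_nth[OF less_imp_le[OF assms(3)]] by auto
  finally show ?thesis .
qed

lemma is_perm_nth_bounds: "is_perm t k \<Longrightarrow> p < k \<Longrightarrow> 1 \<le> t ! p \<and> t ! p \<le> k"
  unfolding is_perm_iff by (metis atLeastAtMost_iff nth_mem)

lemma is_perm_lt_Suc: "is_perm t k \<Longrightarrow> \<forall>x\<in>set t. x < Suc k"
  unfolding is_perm_iff by auto

lemma is_perm_nth_eq_iff: "is_perm t k \<Longrightarrow> i < k \<Longrightarrow> j < k \<Longrightarrow> t ! i = t ! j \<longleftrightarrow> i = j"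
  unfolding is_perm_iff using nth_eq_iff_index_eq by auto

lemma run_min_take_in_ltr_min_values:
  assumes P: "is_perm t k" and i: "0 < i" "i \<le> k"
  shows "run_min (Suc k) (take i t) \<in> ltr_min_values t k"
proof -
  have len: "length t = k"
    using P by (simp add: is_perm_iff)
  define v where "v = Min (set (take i t))"
  have v: "run_min (Suc k) (take i t) = v"
    unfolding v_def using run_min_take_eq_Min[OF is_perm_lt_Suc[OF P] i(1)] i(2) len by simp
  have "v \<in> set (take i t)"
    unfolding v_def using i len by (intro Min_in) auto
  then obtain p where p: "p < i" "t ! p = v"
    using i len by (auto simp: set_take_conv_nth)
  have "ltrmin t p"
    unfolding ltrmin_def
  proof (intro allI impI)
    fix j
    assume "j < p"
    then have "v \<le> t ! j"
      unfolding v_def using p i len by (intro Min_le) (auto simp: set_take_conv_nth)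
    moreover have "t ! j \<noteq> t ! p"
      using is_perm_nth_eq_iff[OF P, of j p] \<open>j < p\<close> p i by simp
    ultimately show "t ! p < t ! j"
      using p by simp
  qed
  then show ?thesis
    unfolding v ltr_min_values_def using p i by auto
qed

lemma ltrmin_not_one_imp_smaller_later:
  assumes P: "is_perm t k" and p: "p < k" "ltrmin t p" "t ! p \<noteq> 1"
  shows "\<exists>q. p < q \<and> q < k \<and> t ! q < t ! p"
proof -
  have "1 \<in> set t"
    using P p by (auto simp: is_perm_iff)
  then obtain q where q: "q < k" "t ! q = 1"
    using P by (auto simp: in_set_conv_nth is_perm_iff)
  have "\<not> q < p"
  proof
    assume "q < p"
    then have "t ! p < 1"
      using p(2) q unfolding ltrmin_def by auto
    then show False
      using is_perm_nth_bounds[OF P p(1)] by simp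
  qed
  moreover have "q \<noteq> p"
    using p q by auto
  ultimately show ?thesis
    using q p is_perm_nth_bounds[OF P p(1)] by (intro exI[of _ q]) simp
qed

lemma ltr_min_eq_run_min_before_next:
  assumes P: "is_perm t k" and p: "p < k" "ltrmin t p" "t ! p \<noteq> 1"
  obtains i where "0 < i" "i < k" "t ! i < t ! p" "run_min (Suc k) (take i t) = t ! p"
proof -
  have len: "length t = k"
    using P by (simp add: is_perm_iff)
  define i where "i = (LEAST i. p < i \<and> i < k \<and> t ! i < t ! p)"
  have i: "p < i" "i < k" "t ! i < t ! p"
    using LeastI_ex[OF ltrmin_not_one_imp_smaller_later[OF assms]] unfolding i_def by auto
  have "Min (set (take i t)) = t ! p"
  proof (rule Min_eqI)
    fix y
    assume "y \<in> set (take i t)"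
    then obtain j where j: "j < i" "y = t ! j"
      using i len by (auto simp: set_take_conv_nth)
    show "t ! p \<le> y"
    proof (cases "j < p")
      case True
      then show ?thesis
        using p(2) j unfolding ltrmin_def by (simp add: less_imp_le)
    next
      case False
      then have "\<not> t ! j < t ! p"
        using j not_less_Least[of j "\<lambda>i. p < i \<and> i < k \<and> t ! i < t ! p"] i
        unfolding i_def by (cases "j = p") auto
      then show ?thesis
        using j by simp
    qed
  qed (use i len in \<open>auto simp: set_take_conv_nth\<close>)
  then have "run_min (Suc k) (take i t) = t ! p"
    using run_min_take_eq_Min[OF is_perm_lt_Suc[OF P], of i] i len by simp
  moreover have "0 < i"
    using i(1) by simp
  ultimately show thesis
    using i that by blast
qed

lemma run_min_valleys_eq_ltr_minima:
  assumes P: "is_perm t k"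
  shows "{run_min (Suc k) (take i t) | i. 0 < i \<and> i < k \<and> t ! i < run_min (Suc k) (take i t)}
       = ltr_min_values t k - {1}"
proof (intro equalityI subsetI)
  fix v
  assume "v \<in> {run_min (Suc k) (take i t) | i. 0 < i \<and> i < k \<and> t ! i < run_min (Suc k) (take i t)}"
  then obtain i where i: "v = run_min (Suc k) (take i t)" "0 < i" "i < k" "t ! i < v"
    by blast
  then show "v \<in> ltr_min_values t k - {1}"
    using run_min_take_in_ltr_min_values[OF P, of i] is_perm_nth_bounds[OF P i(3)] by auto
next
  fix v
  assume "v \<in> ltr_min_values t k - {1}"
  then obtain p where p: "p < k" "ltrmin t p" "t ! p = v" "v \<noteq> 1"
    unfolding ltr_min_values_def by blast
  then obtain i where "0 < i" "i < k" "t ! i < v" "run_min (Suc k) (take i t) = v"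
    using ltr_min_eq_run_min_before_next[OF P p(1,2)] by auto
  then show "v \<in> {run_min (Suc k) (take i t) | i. 0 < i \<and> i < k \<and> t ! i < run_min (Suc k) (take i t)}"
    by auto
qed

text \<open>Here 123-avoidance enters: an entry that is neither an LTR minimum nor an RTL maximum
  is the middle of an occurrence of 123.\<close>
lemma ltrmin_or_rtlmax:
  assumes P: "is_perm t k" and av: "avoids123 t" and p: "p < k"
  shows "ltrmin t p \<or> rtlmax t p"
proof (rule ccontr)
  assume "\<not> (ltrmin t p \<or> rtlmax t p)"
  then obtain j l where j: "j < p" "\<not> t ! p < t ! j" and l: "p < l" "l < length t" "\<not> t ! l < t ! p"
    unfolding ltrmin_def rtlmax_def by blast
  have "length t = k"
    using P by (simp add: is_perm_iff)
  then have "t ! j < t ! p" "t ! p < t ! l"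
    using j l p is_perm_nth_eq_iff[OF P, of j p] is_perm_nth_eq_iff[OF P, of l p] by auto
  with av j l show False
    unfolding avoids123_def by blast
qed

lemma set_take_ltrmin_rtlmax:
  assumes P: "is_perm t k" and p: "p < k" "ltrmin t p" "rtlmax t p"
  shows "set (take p t) = {Suc (t ! p)..k}"
proof (intro equalityI subsetI)
  have len: "length t = k"
    using P by (simp add: is_perm_iff)
  fix x
  show "x \<in> {Suc (t ! p)..k}" if x: "x \<in> set (take p t)"
  proof -
    obtain j where j: "j < p" "x = t ! j"
      using x p(1) len by (auto simp: set_take_conv_nth)
    then show ?thesis
      using p(2) is_perm_nth_bounds[OF P, of j] p(1) unfolding ltrmin_def by auto
  qed
  show "x \<in> set (take p t)" if x: "x \<in> {Suc (t ! p)..k}"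
  proof -
    have "x \<in> set t"
      using P x by (auto simp: is_perm_iff)
    then obtain q where q: "q < k" "t ! q = x"
      using len by (auto simp: in_set_conv_nth)
    moreover have "\<not> p < q" "q \<noteq> p"
      using p(3) q x len unfolding rtlmax_def by auto
    ultimately show ?thesis
      using p len by (auto simp: set_take_conv_nth)
  qed
qed

text \<open>An entry that is both would make the entries before it the largest ones.\<close>
lemma not_ltrmin_and_rtlmax:
  assumes P: "is_perm t k" and ind: "indecomposable t" and k: "2 \<le> k" and p: "p < k"
  shows "\<not> (ltrmin t p \<and> rtlmax t p)"
proof
  assume lr: "ltrmin t p \<and> rtlmax t p"
  have len: "length t = k"
    using P by (simp add: is_perm_iff)
  have S: "set (take p t) = {Suc (t ! p)..k}"
    using set_take_ltrmin_rtlmax[OF P p] lr by simp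
  have "card (set (take p t)) = p"
    using P p by (simp add: is_perm_iff distinct_card)
  then have "k - t ! p = p"
    using S by simp
  then have tp: "t ! p = k - p"
    using is_perm_nth_bounds[OF P p] by arith
  show False
  proof (cases "p = 0")
    case True
    then have "set (take 1 t) = {length t - 1 + 1..length t}"
      using tp len k by (cases t) auto
    moreover have "0 < (1::nat)" "1 < length t"
      using len k by auto
    ultimately show False
      using ind unfolding indecomposable_def by blast
  next
    case False
    have "set (take p t) = {length t - p + 1..length t}"
      using S tp p len by simp
    then show False
      using ind False p len unfolding indecomposable_def by auto
  qed
qed

lemma length_rev_compl [simp]: "length (rev_compl t) = length t"
  by (simp add: rev_compl_def)

lemma nth_rev_compl: "i < length t \<Longrightarrow> rev_compl t ! i = Suc (length t) - t ! (length t - Suc i)"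
  by (simp add: rev_compl_def rev_nth)

lemma is_perm_rev_compl:
  assumes P: "is_perm t k"
  shows "is_perm (rev_compl t) k"
proof -
  have len: "length t = k" and st: "set t = {1..k}"
    using P by (auto simp: is_perm_iff)
  have "inj_on (\<lambda>x. Suc k - x) {1..k}"
    by (auto simp: inj_on_def)
  then have "distinct (rev_compl t)"
    using P len st by (simp add: rev_compl_def distinct_map is_perm_iff)
  moreover have "y \<in> (\<lambda>x. Suc k - x) ` {1..k}" if "y \<in> {1..k}" for y
    using that by (intro rev_image_eqI[of "Suc k - y"]) auto
  then have "set (rev_compl t) = {1..k}"
    unfolding rev_compl_def len set_map set_rev st by auto
  ultimately show ?thesis
    using len by (simp add: is_perm_iff)
qed

lemma ltrmin_rev_compl_iff:
  assumes P: "is_perm t k" and i: "i < k"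
  shows "ltrmin (rev_compl t) i \<longleftrightarrow> rtlmax t (k - Suc i)"
proof -
  have len: "length t = k"
    using P by (simp add: is_perm_iff)
  have diff_less_iff: "Suc k - a < Suc k - b \<longleftrightarrow> b < a" if "a \<le> k" "b \<le> k" for a b
    using that by auto
  have "rev_compl t ! i < rev_compl t ! j \<longleftrightarrow> t ! (k - Suc j) < t ! (k - Suc i)" if "j < k" for j
    using nth_rev_compl[of i t] nth_rev_compl[of j t] that i len diff_less_iff
      is_perm_nth_bounds[OF P, of "k - Suc i"] is_perm_nth_bounds[OF P, of "k - Suc j"] by simp
  moreover have "(\<forall>j<i. t ! (k - Suc j) < t ! (k - Suc i)) \<longleftrightarrow> rtlmax t (k - Suc i)"
    unfolding rtlmax_def len
  proof (intro iffI allI impI)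
    fix l
    assume all: "\<forall>j<i. t ! (k - Suc j) < t ! (k - Suc i)" and l: "k - Suc i < l \<and> l < k"
    then have "k - Suc l < i" "k - Suc (k - Suc l) = l"
      using i by auto
    then show "t ! l < t ! (k - Suc i)"
      using all by metis
  qed (use i in auto)
  ultimately show ?thesis
    using i unfolding ltrmin_def by auto
qed

section \<open>The irreducible case\<close>

lemma lam_eq_lam_aux: "is_perm t k \<Longrightarrow> lam t = lam_aux (Suc k) t"
  by (simp add: lam_def is_perm_iff)

lemma run_min_is_perm:
  assumes "is_perm t k"
  shows "run_min (Suc k) t = 1"
proof (cases "k = 0")
  case False
  have "Min {1..k} = (1::nat)"
    using False by (intro Min_eqI) auto
  then show ?thesis
    using run_min_take_eq_Min[OF is_perm_lt_Suc[OF assms(1)], of k] assms False by (simp add: is_perm_iff)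
qed (use assms in \<open>simp add: is_perm_iff\<close>)

lemma cnt_U_lam: "is_perm t k \<Longrightarrow> cnt U (lam t) = k"
  by (simp add: lam_eq_lam_aux cnt_U_lam_aux run_min_is_perm)

lemma cnt_D_lam: "is_perm t k \<Longrightarrow> cnt D (lam t) = k"
  using lam_eq_lam_aux[of t k] by (simp add: cnt_D_lam_aux is_perm_iff)

lemma set_codeA_lam:
  assumes P: "is_perm t k"
  shows "set (codeA (lam t)) = (\<lambda>v. Suc k - v) ` (ltr_min_values t k - {1})"
proof -
  have "set (codeA (lam t)) = (\<lambda>v. Suc k - v) `
      {run_min (Suc k) (take i t) | i. 0 < i \<and> i < k \<and> t ! i < run_min (Suc k) (take i t)}"
    using set_codeA_lam_aux[of "Suc k" t] lam_eq_lam_aux[OF P] P by (auto simp: is_perm_iff)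
  then show ?thesis
    unfolding run_min_valleys_eq_ltr_minima[OF P] .
qed

lemma set_codeD_lam:
  assumes P: "is_perm t k"
  shows "set (codeD (lam t)) = {i. 0 < i \<and> i < k \<and> ltrmin t i}"
  using set_codeD_lam_aux[of "Suc k" t] lam_eq_lam_aux[OF P] P
    nth_lt_run_min_iff_ltrmin[OF is_perm_lt_Suc[OF P]]
  by (auto simp: is_perm_iff)

lemma one_in_ltr_min_values:
  assumes P: "is_perm t k" and k: "1 \<le> k"
  shows "1 \<in> ltr_min_values t k"
proof -
  have "1 \<in> set t"
    using P k by (simp add: is_perm_iff)
  then obtain q where q: "q < k" "t ! q = 1"
    using P by (auto simp: in_set_conv_nth is_perm_iff)
  have "ltrmin t q"
    unfolding ltrmin_def
  proof (intro allI impI)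
    fix j
    assume "j < q"
    then have "t ! j \<noteq> 1" "1 \<le> t ! j"
      using is_perm_nth_eq_iff[OF P, of j q] q is_perm_nth_bounds[OF P, of j] by auto
    then show "t ! q < t ! j"
      using q by simp
  qed
  with q have "1 = t ! q \<and> q < k \<and> ltrmin t q"
    by simp
  then show ?thesis
    unfolding ltr_min_values_def by blast
qed

lemma ltr_min_values_rev_compl:
  assumes P: "is_perm t k"
  shows "ltr_min_values (rev_compl t) k = (\<lambda>v. Suc k - v) ` rtl_max_values t k"
proof (intro equalityI subsetI)
  have len: "length t = k"
    using P by (simp add: is_perm_iff)
  fix v
  show "v \<in> (\<lambda>v. Suc k - v) ` rtl_max_values t k" if v: "v \<in> ltr_min_values (rev_compl t) k"
  proof -
    obtain i where i: "i < k" "ltrmin (rev_compl t) i" "v = rev_compl t ! i"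
      using v unfolding ltr_min_values_def by blast
    then have "k - Suc i < k" "rtlmax t (k - Suc i)" "v = Suc k - t ! (k - Suc i)"
      using ltrmin_rev_compl_iff[OF P i(1)] nth_rev_compl[of i t] len by auto
    then show ?thesis
      unfolding rtl_max_values_def by blast
  qed
  show "v \<in> ltr_min_values (rev_compl t) k" if v: "v \<in> (\<lambda>v. Suc k - v) ` rtl_max_values t k"
  proof -
    obtain p where p: "p < k" "rtlmax t p" "v = Suc k - t ! p"
      using v unfolding rtl_max_values_def by blast
    define i where "i = k - Suc p"
    have i: "i < k" "k - Suc i = p"
      using p by (auto simp: i_def)
    then have "ltrmin (rev_compl t) i" "v = rev_compl t ! i"
      using ltrmin_rev_compl_iff[OF P i(1)] nth_rev_compl[of i t] len p by auto
    with i show ?thesis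
      unfolding ltr_min_values_def by blast
  qed
qed

lemma ltrmin_iff_not_rtlmax:
  assumes "is_perm t k" "avoids123 t" "indecomposable t" "2 \<le> k" "p < k"
  shows "ltrmin t p \<longleftrightarrow> \<not> rtlmax t p"
  using ltrmin_or_rtlmax[OF assms(1,2,5)] not_ltrmin_and_rtlmax[OF assms(1,3,4,5)] by blast

lemma rtl_max_values_eq_compl:
  assumes P: "is_perm t k" and av: "avoids123 t" and ind: "indecomposable t" and k: "2 \<le> k"
  shows "rtl_max_values t k = {1..k} - ltr_min_values t k"
proof -
  have len: "length t = k" and st: "set t = {1..k}"
    using P by (auto simp: is_perm_iff)
  have "{1..k} = {t ! p | p. p < k}"
    using set_take_conv_nth[of k t] len st by simp
  moreover have "t ! p = t ! q \<longleftrightarrow> p = q" if "p < k" "q < k" for p q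
    using is_perm_nth_eq_iff[OF P that] .
  ultimately show ?thesis
    unfolding rtl_max_values_def ltr_min_values_def
    using ltrmin_iff_not_rtlmax[OF P av ind k] by auto
qed

lemma image_reflect_Collect:
  fixes c :: nat
  assumes "a \<le> c" "b \<le> c"
  shows "(\<lambda>x. c - x) ` {x \<in> {a..b}. P x} = {y \<in> {c - b..c - a}. P (c - y)}"
proof (intro equalityI subsetI)
  fix y
  assume "y \<in> {y \<in> {c - b..c - a}. P (c - y)}"
  then show "y \<in> (\<lambda>x. c - x) ` {x \<in> {a..b}. P x}"
    using assms by (intro rev_image_eqI[of "c - y"]) auto
qed (use assms in auto)

lemma image_reflect_twice:
  fixes c :: nat
  assumes "X \<subseteq> {..c}"
  shows "(\<lambda>x. c - x) ` (\<lambda>x. c - x) ` X = X"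
proof -
  have "(\<lambda>x. c - x) ` (\<lambda>x. c - x) ` X = (\<lambda>x. x) ` X"
    unfolding image_image using assms by (intro image_cong) auto
  then show ?thesis
    by simp
qed

lemma mem_image_pred_codeA_lam_iff:
  assumes P: "is_perm t k" and x: "x \<in> {1..k-2}"
  shows "x \<in> (\<lambda>a. a - 1) ` set (codeA (lam t)) \<longleftrightarrow> k - x \<in> ltr_min_values t k"
proof
  assume "x \<in> (\<lambda>a. a - 1) ` set (codeA (lam t))"
  then obtain v where v: "v \<in> ltr_min_values t k" "x = Suc k - v - 1"
    unfolding set_codeA_lam[OF P] by blast
  moreover have "v \<le> k"
    using v(1) is_perm_nth_bounds[OF P] unfolding ltr_min_values_def by auto
  ultimately show "k - x \<in> ltr_min_values t k"
    by simp
next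
  assume "k - x \<in> ltr_min_values t k"
  moreover have "k - x \<noteq> 1" "x = Suc k - (k - x) - 1"
    using x by auto
  ultimately show "x \<in> (\<lambda>a. a - 1) ` set (codeA (lam t))"
    unfolding set_codeA_lam[OF P] by blast
qed

lemma set_codeA_lam_rev_compl:
  assumes P: "is_perm t k"
  shows "set (codeA (lam (rev_compl t))) = rtl_max_values t k - {k}"
proof -
  let ?R = "rtl_max_values t k" and ?f = "\<lambda>v. Suc k - v"
  have inj: "inj_on ?f {..k}"
    by (auto simp: inj_on_def)
  have R: "?R \<subseteq> {..k}"
    unfolding rtl_max_values_def using is_perm_nth_bounds[OF P] by auto
  have "?f ` (?R - {k}) = ?f ` ?R - ?f ` {k}"
    by (rule inj_on_image_set_diff[OF inj]) (use R in auto)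
  then have "set (codeA (lam (rev_compl t))) = ?f ` ?f ` (?R - {k})"
    unfolding set_codeA_lam[OF is_perm_rev_compl[OF P]] ltr_min_values_rev_compl[OF P] by simp
  also have "\<dots> = ?R - {k}"
    by (rule image_reflect_twice) (use R in auto)
  finally show ?thesis .
qed

text \<open>Both sides equal the set of values in \<open>{2..k-1}\<close> that are not LTR minima.\<close>
lemma reflected_complement_codeA_lam:
  assumes P: "is_perm t k" and av: "avoids123 t" and ind: "indecomposable t" and k: "2 \<le> k"
  shows "(\<lambda>x. k - x) ` ({1..k-2} - (\<lambda>a. a - 1) ` set (codeA (lam t))) = set (codeA (lam (rev_compl t)))"
proof -
  let ?V = "ltr_min_values t k"
  have "{1..k-2} - (\<lambda>a. a - 1) ` set (codeA (lam t)) = {x \<in> {1..k-2}. k - x \<notin> ?V}"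
    using mem_image_pred_codeA_lam_iff[OF P] by blast
  then have "(\<lambda>x. k - x) ` ({1..k-2} - (\<lambda>a. a - 1) ` set (codeA (lam t))) =
      {y \<in> {2..k-1}. k - (k - y) \<notin> ?V}"
    using k image_reflect_Collect[of 1 k "k - 2" "\<lambda>x. k - x \<notin> ?V"] by simp
  also have "\<dots> = rtl_max_values t k - {k}"
    unfolding rtl_max_values_eq_compl[OF P av ind k]
  proof (intro set_eqI)
    fix x
    show "x \<in> {y \<in> {2..k-1}. k - (k - y) \<notin> ?V} \<longleftrightarrow> x \<in> {1..k} - ?V - {k}"
      using one_in_ltr_min_values[OF P] k by (cases "x = 1") auto
  qed
  finally show ?thesis
    unfolding set_codeA_lam_rev_compl[OF P] .
qed

text \<open>Both sides equal the set of \<open>y \<in> {1..k-2}\<close> whose mirror position \<open>k-1-y\<close> is not an LTR minimum.\<close>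
lemma reflected_complement_codeD_lam:
  assumes P: "is_perm t k" and av: "avoids123 t" and ind: "indecomposable t" and k: "2 \<le> k"
  shows "(\<lambda>x. k - 1 - x) ` ({1..k-2} - set (codeD (lam t))) = set (codeD (lam (rev_compl t)))"
proof -
  have "{1..k-2} - set (codeD (lam t)) = {x \<in> {1..k-2}. \<not> ltrmin t x}"
    unfolding set_codeD_lam[OF P] by auto
  then have "(\<lambda>x. k - 1 - x) ` ({1..k-2} - set (codeD (lam t))) = {y \<in> {1..k-2}. \<not> ltrmin t (k - 1 - y)}"
    using k image_reflect_Collect[of 1 "k - 1" "k - 2" "\<lambda>x. \<not> ltrmin t x"]
    by (simp add: numeral_2_eq_2)
  moreover have "set (codeD (lam (rev_compl t))) = {y \<in> {1..k-2}. \<not> ltrmin t (k - 1 - y)}"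
    unfolding set_codeD_lam[OF is_perm_rev_compl[OF P]]
  proof (rule Collect_cong)
    fix y
    have "ltrmin t 0"
      by (simp add: ltrmin_def)
    then have "y = k - 1 \<Longrightarrow> \<not> \<not> ltrmin t (k - 1 - y)"
      by simp
    then show "(0 < y \<and> y < k \<and> ltrmin (rev_compl t) y) \<longleftrightarrow> y \<in> {1..k-2} \<and> \<not> ltrmin t (k - 1 - y)"
      using ltrmin_rev_compl_iff[OF P, of y] ltrmin_iff_not_rtlmax[OF P av ind k, of "k - 1 - y"] k
      by (cases "y = k - 1") auto
  qed
  ultimately show ?thesis
    by simp
qed

lemma map_diff_rev_sorted_list_of_set:
  fixes S :: "nat set"
  assumes "finite S" "\<forall>x\<in>S. x \<le> c"
  shows "map (\<lambda>x. c - x) (rev (sorted_list_of_set S)) = sorted_list_of_set ((\<lambda>x. c - x) ` S)"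
proof (rule sorted_distinct_set_unique)
  have "sorted_wrt (\<lambda>a b. c - b < c - a) (sorted_list_of_set S)"
    using assms by (intro sorted_wrt_mono_rel[OF _ strict_sorted_list_of_set]) auto
  then have "sorted_wrt (<) (map (\<lambda>x. c - x) (rev (sorted_list_of_set S)))"
    by (simp add: sorted_wrt_map sorted_wrt_rev)
  then show "sorted (map (\<lambda>x. c - x) (rev (sorted_list_of_set S)))"
    and "distinct (map (\<lambda>x. c - x) (rev (sorted_list_of_set S)))"
    by (simp_all add: strict_sorted_iff)
qed (use assms in simp_all)

lemma sorted_list_of_set_set_codeA: "sorted_list_of_set (set (codeA P)) = codeA P"
  using sorted_wrt_codeA by (simp add: sorted_list_of_set.idem_if_sorted_distinct strict_sorted_iff)

lemma sorted_list_of_set_set_codeD: "sorted_list_of_set (set (codeD P)) = codeD P"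
  using sorted_wrt_codeD by (simp add: sorted_list_of_set.idem_if_sorted_distinct strict_sorted_iff)

lemma Lirr_lam_ge_2:
  assumes P: "is_perm t k" and av: "avoids123 t" and ind: "indecomposable t" and k: "2 \<le> k"
  shows "Lirr (lam t) = lam (rev_compl t)"
proof -
  let ?Q = "lam (rev_compl t)"
  have Pr: "is_perm (rev_compl t) k"
    by (rule is_perm_rev_compl[OF P])
  have n: "length (lam t) div 2 = k"
    using P by (simp add: length_eq_cnt_U_plus_cnt_D cnt_U_lam cnt_D_lam)
  have "map (\<lambda>x. k - x) (rev (sorted_list_of_set ({1..k-2} - (\<lambda>a. a - 1) ` set (codeA (lam t))))) =
      sorted_list_of_set ((\<lambda>x. k - x) ` ({1..k-2} - (\<lambda>a. a - 1) ` set (codeA (lam t))))"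
    by (rule map_diff_rev_sorted_list_of_set) auto
  moreover have "map (\<lambda>x. k - 1 - x) (rev (sorted_list_of_set ({1..k-2} - set (codeD (lam t))))) =
      sorted_list_of_set ((\<lambda>x. k - 1 - x) ` ({1..k-2} - set (codeD (lam t))))"
    by (rule map_diff_rev_sorted_list_of_set) auto
  ultimately have "Lirr (lam t) =
      path_of_code k (sorted_list_of_set ((\<lambda>x. k - x) ` ({1..k-2} - (\<lambda>a. a - 1) ` set (codeA (lam t)))))
        (sorted_list_of_set ((\<lambda>x. k - 1 - x) ` ({1..k-2} - set (codeD (lam t)))))"
    unfolding Lirr_def Let_def n by (simp only:)
  also have "\<dots> = path_of_code k (codeA ?Q) (codeD ?Q)"
    unfolding reflected_complement_codeA_lam[OF assms] reflected_complement_codeD_lam[OF assms]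
      sorted_list_of_set_set_codeA sorted_list_of_set_set_codeD ..
  also have "\<dots> = ?Q"
  proof (rule path_of_code_codes)
    have ne: "rev_compl t \<noteq> []"
      using Pr k by (auto simp: is_perm_iff)
    show "?Q \<noteq> []" "last ?Q = D"
      unfolding lam_eq_lam_aux[OF Pr] lam_aux_eq_Nil_iff using ne last_lam_aux by auto
    show "cnt U ?Q = k" "cnt D ?Q = k"
      using Pr by (simp_all add: cnt_U_lam cnt_D_lam)
  qed
  finally show ?thesis .
qed

lemma Lirr_lam:
  assumes P: "is_perm t k" and av: "avoids123 t" and ind: "indecomposable t" and k: "1 \<le> k"
  shows "Lirr (lam t) = lam (rev_compl t)"
proof (cases "k = 1")
  case True
  then have "length t = 1" "set t = {1}"
    using P by (auto simp: is_perm_iff)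
  then have "t = [1]"
    by (cases t) auto
  then show ?thesis
    by (simp add: lam_def rev_compl_def Lirr_def codeA_def codeD_def valleys_def path_of_code_def)
next
  case False
  with k show ?thesis
    by (intro Lirr_lam_ge_2[OF P av ind]) simp
qed

lemma run_min_eq_top_imp_set_take:
  assumes P: "is_perm t k" and i: "0 < i" "i \<le> k" and m: "run_min (Suc k) (take i t) = Suc k - i"
  shows "set (take i t) = {Suc k - i..k}"
proof (rule card_subset_eq)
  have "Min (set (take i t)) = Suc k - i"
    using run_min_take_eq_Min[OF is_perm_lt_Suc[OF P] i(1)] i(2) m P by (simp add: is_perm_iff)
  then show "set (take i t) \<subseteq> {Suc k - i..k}"
    using P Min_le[of "set (take i t)"] by (fastforce simp: is_perm_iff dest: in_set_takeD)
  show "card (set (take i t)) = card {Suc k - i..k}"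
    using P i by (simp add: is_perm_iff distinct_card)
qed simp

text \<open>A return before the end of \<open>\<lambda> t\<close> would exhibit a prefix of \<open>t\<close> made of the largest values.\<close>
lemma returns_lam_indecomposable:
  assumes P: "is_perm t k" and ind: "indecomposable t" and k: "1 \<le> k"
  shows "returns (lam t) = [length (lam t)]"
proof -
  have len: "length t = k"
    using P by (simp add: is_perm_iff)
  have no_return: "run_min (Suc k) (take i t) + i \<noteq> Suc k" if "0 < i" "i < k" for i
  proof
    assume "run_min (Suc k) (take i t) + i = Suc k"
    then have "set (take i t) = {Suc k - i..k}"
      using run_min_eq_top_imp_set_take[OF P, of i] that by simp
    then have "set (take i t) = {length t - i + 1..length t}"
      using that len by (simp add: Suc_diff_le)
    then show False
      using ind that len unfolding indecomposable_def by blast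
  qed
  have "set (returns (lam t)) = {length (lam_aux (Suc k) (take i t)) | i. 0 < i \<and> i \<le> k \<and>
      int (Suc k) - int (run_min (Suc k) (take i t)) - int i = 0}"
    unfolding returns_eq_returns_from lam_eq_lam_aux[OF P] set_returns_from_lam_aux len by simp
  also have "\<dots> = {length (lam_aux (Suc k) (take k t))}"
  proof -
    have "int (Suc k) - int (run_min (Suc k) (take i t)) - int i = 0 \<longleftrightarrow> i = k" if "0 < i" "i \<le> k" for i
      using no_return[of i] that run_min_is_perm[OF P] run_min_le[of "Suc k" "take i t"] len
      by (cases "i < k") auto
    with k show ?thesis
      by auto
  qed
  finally have "set (returns (lam t)) = {length (lam t)}"
    using len lam_eq_lam_aux[OF P] by simp
  moreover have "distinct (returns (lam t))"
    unfolding returns_def by (simp add: distinct_map)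
  ultimately have "length (returns (lam t)) = 1"
    using distinct_card by fastforce
  with \<open>set (returns (lam t)) = {length (lam t)}\<close> show ?thesis
    by (cases "returns (lam t)") auto
qed

section \<open>Decomposition into indecomposable blocks\<close>

lemma avoids123_appendD1: "avoids123 (xs @ ys) \<Longrightarrow> avoids123 xs"
proof (unfold avoids123_def, elim contrapos_nn exE conjE)
  fix i j l
  assume "i < j" "j < l" "l < length xs" "xs ! i < xs ! j" "xs ! j < xs ! l"
  then show "\<exists>i j l. i < j \<and> j < l \<and> l < length (xs @ ys) \<and>
      (xs @ ys) ! i < (xs @ ys) ! j \<and> (xs @ ys) ! j < (xs @ ys) ! l"
    by (intro exI[of _ i] exI[of _ j] exI[of _ l]) (auto simp: nth_append)
qed

lemma avoids123_appendD2: "avoids123 (xs @ ys) \<Longrightarrow> avoids123 ys"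
proof (unfold avoids123_def, elim contrapos_nn exE conjE)
  fix i j l
  assume "i < j" "j < l" "l < length ys" "ys ! i < ys ! j" "ys ! j < ys ! l"
  then show "\<exists>i j l. i < j \<and> j < l \<and> l < length (xs @ ys) \<and>
      (xs @ ys) ! i < (xs @ ys) ! j \<and> (xs @ ys) ! j < (xs @ ys) ! l"
    by (intro exI[of _ "length xs + i"] exI[of _ "length xs + j"] exI[of _ "length xs + l"]) auto
qed

lemma avoids123_map_addD: "avoids123 (map (\<lambda>x. x + c) xs) \<Longrightarrow> avoids123 xs"
proof (unfold avoids123_def, elim contrapos_nn exE conjE)
  fix i j l
  assume "i < j" "j < l" "l < length xs" "xs ! i < xs ! j" "xs ! j < xs ! l"
  then show "\<exists>i j l. i < j \<and> j < l \<and> l < length (map (\<lambda>x. x + c) xs) \<and>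
      map (\<lambda>x. x + c) xs ! i < map (\<lambda>x. x + c) xs ! j \<and>
      map (\<lambda>x. x + c) xs ! j < map (\<lambda>x. x + c) xs ! l"
    by (intro exI[of _ i] exI[of _ j] exI[of _ l]) auto
qed

lemma is_perm_split_top_prefix:
  assumes P: "is_perm s n" and k: "k \<le> n" and top: "set (take k s) = {n - k + 1..n}"
  shows "s = map (\<lambda>x. x + (n - k)) (map (\<lambda>x. x - (n - k)) (take k s)) @ drop k s"
    and "is_perm (map (\<lambda>x. x - (n - k)) (take k s)) k"
    and "is_perm (drop k s) (n - k)"
proof -
  let ?c = "n - k"
  have len: "length s = n" and dist: "distinct s" and st: "set s = {1..n}"
    using P by (auto simp: is_perm_iff)
  have gt: "\<forall>x\<in>set (take k s). ?c < x"
    using top by auto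
  then have "map (\<lambda>x. x + ?c) (map (\<lambda>x. x - ?c) (take k s)) = take k s"
    unfolding map_map o_def by (intro map_idI) auto
  then show "s = map (\<lambda>x. x + ?c) (map (\<lambda>x. x - ?c) (take k s)) @ drop k s"
    by simp
  have "inj_on (\<lambda>x. x - ?c) (set (take k s))"
    using gt by (auto simp: inj_on_def)
  moreover have "(\<lambda>x. x - ?c) ` {n - k + 1..n} = {1..k}"
  proof -
    have "y \<in> (\<lambda>x. x - ?c) ` {n - k + 1..n}" if "y \<in> {1..k}" for y
      using that k by (intro rev_image_eqI[of "y + ?c"]) auto
    then show ?thesis
      using k by auto
  qed
  ultimately show "is_perm (map (\<lambda>x. x - ?c) (take k s)) k"
    using dist len k top by (simp add: is_perm_iff distinct_map)
  have "set (take k s) \<inter> set (drop k s) = {}" "set (take k s) \<union> set (drop k s) = {1..n}"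
    using dist st set_take_disj_set_drop_if_distinct[of s k k] by (auto simp flip: set_append)
  then have "set (drop k s) = {1..n} - {n - k + 1..n}"
    unfolding top by blast
  also have "\<dots> = {1..?c}"
    using k by auto
  finally have "set (drop k s) = {1..?c}" .
  then show "is_perm (drop k s) ?c"
    using dist len by (simp add: is_perm_iff)
qed

text \<open>Split off the shortest nonempty prefix consisting of the largest values.\<close>
lemma is_perm_decompose:
  assumes P: "is_perm s n" and n: "0 < n"
  obtains k \<tau> \<rho> where "0 < k" "k \<le> n" "s = map (\<lambda>x. x + (n - k)) \<tau> @ \<rho>"
    "is_perm \<tau> k" "indecomposable \<tau>" "is_perm \<rho> (n - k)"
proof -
  define top where "top = (\<lambda>k. 0 < k \<and> k \<le> n \<and> set (take k s) = {n - k + 1..n})"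
  have "top n"
    using P n by (simp add: top_def is_perm_iff)
  define k where "k = (LEAST k. top k)"
  have k: "0 < k" "k \<le> n" "set (take k s) = {n - k + 1..n}"
    using LeastI[of top n, OF \<open>top n\<close>] unfolding k_def top_def by auto
  define \<tau> where "\<tau> = map (\<lambda>x. x - (n - k)) (take k s)"
  note split = is_perm_split_top_prefix[OF P k(2,3), folded \<tau>_def]
  have "indecomposable \<tau>"
    unfolding indecomposable_def
  proof (intro allI impI notI)
    fix j
    assume j: "0 < j \<and> j < length \<tau>" and top_j: "set (take j \<tau>) = {length \<tau> - j + 1..length \<tau>}"
    have len: "length \<tau> = k"
      using split(2) by (simp add: is_perm_iff)
    have "set (take j (map (\<lambda>x. x + (n - k)) \<tau>)) = (\<lambda>x. x + (n - k)) ` {k - j + 1..k}"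
      using top_j len by (simp add: take_map)
    also have "\<dots> = {n - j + 1..n}"
      unfolding image_add_atLeastAtMost' using j len k(2) by simp
    finally have "set (take j (map (\<lambda>x. x + (n - k)) \<tau>)) = {n - j + 1..n}" .
    then have "set (take j s) = {n - j + 1..n}"
      using j split(2) by (subst split(1)) (simp add: is_perm_iff)
    then have "top j"
      using j split(2) k(2) by (simp add: top_def is_perm_iff)
    then show False
      using not_less_Least[of j top] j split(2) unfolding k_def[symmetric] by (simp add: is_perm_iff)
  qed
  with k split show thesis
    using that by blast
qed

lemma lam_top_block_append:
  assumes "is_perm \<tau> k" "is_perm \<rho> c"
  shows "lam (map (\<lambda>x. x + c) \<tau> @ \<rho>) = lam \<tau> @ lam \<rho>"
proof -
  have "run_min (Suc (k + c)) (map (\<lambda>x. x + c) \<tau>) = Suc c"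
    using run_min_shift[of "Suc k" c \<tau>] run_min_is_perm[OF assms(1)] by simp
  then show ?thesis
    using assms lam_aux_shift[of "Suc k" c \<tau>]
    by (simp add: lam_def lam_aux_append lam_eq_lam_aux is_perm_iff)
qed

lemma rev_compl_top_block_append:
  assumes "is_perm \<tau> k" "is_perm \<rho> c"
  shows "rev_compl (map (\<lambda>x. x + c) \<tau> @ \<rho>) = map (\<lambda>x. x + k) (rev_compl \<rho>) @ rev_compl \<tau>"
proof -
  have "\<forall>x\<in>set \<rho>. x \<le> c" "\<forall>x\<in>set \<tau>. x \<le> k"
    using assms by (auto simp: is_perm_iff)
  then show ?thesis
    using assms by (auto simp: rev_compl_def is_perm_iff rev_map intro!: map_cong)
qed

text \<open>The reverse-complement reverses the order of the blocks, as \<open>L'\<close> reverses that of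
  the irreducible components.\<close>
lemma lam_rev_compl_eq_Lprime_lam:
  "is_perm s n \<Longrightarrow> avoids123 s \<Longrightarrow> lam (rev_compl s) = Lprime (lam s)"
proof (induction n arbitrary: s rule: less_induct)
  case (less n s)
  show ?case
  proof (cases "n = 0")
    case True
    then show ?thesis
      using less.prems by (simp add: is_perm_iff lam_def rev_compl_def Lprime_def components_def returns_def)
  next
    case False
    then obtain k \<tau> \<rho> where k: "0 < k" "k \<le> n" and s: "s = map (\<lambda>x. x + (n - k)) \<tau> @ \<rho>"
      and \<tau>: "is_perm \<tau> k" "indecomposable \<tau>" and \<rho>: "is_perm \<rho> (n - k)"
      using is_perm_decompose[OF less.prems(1)] by blast
    have av: "avoids123 \<tau>" "avoids123 \<rho>"
      using less.prems(2) avoids123_appendD1 avoids123_appendD2 avoids123_map_addD unfolding s by blast+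
    have "lam (rev_compl s) = lam (rev_compl \<rho>) @ lam (rev_compl \<tau>)"
      unfolding s rev_compl_top_block_append[OF \<tau>(1) \<rho>]
      by (rule lam_top_block_append[OF is_perm_rev_compl[OF \<rho>] is_perm_rev_compl[OF \<tau>(1)]])
    also have "\<dots> = Lprime (lam \<rho>) @ Lirr (lam \<tau>)"
      using less.IH[of "n - k" \<rho>] k \<rho> av Lirr_lam[OF \<tau>(1) av(1) \<tau>(2)] by simp
    also have "\<dots> = Lprime (lam s)"
      unfolding s lam_top_block_append[OF \<tau>(1) \<rho>]
      using returns_lam_indecomposable[OF \<tau>] k \<tau>(1) by (simp add: Lprime_append cnt_U_lam cnt_D_lam)
    finally show ?thesis .
  qed
qed

lemma mu_eq_lam_rev_compl: "is_perm \<sigma> n \<Longrightarrow> mu \<sigma> = lam (rev_compl \<sigma>)"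
  unfolding mu_def lam_def rev_compl_def using mu_aux_eq_lam_aux[of "rev \<sigma>" n 0]
  by (simp add: is_perm_iff)

theorem theorem6:
  fixes n :: nat and \<sigma> :: "nat list"
  assumes "n \<ge> 1"
    and "\<sigma> \<in> permutations_of_set {1..n}"
    and "avoids123 \<sigma>"
  shows "mu \<sigma> = Lprime (lam \<sigma>)"
proof -
  have "is_perm \<sigma> n"
    using assms(2) by (simp add: is_perm_def)
  then show ?thesis
    using lam_rev_compl_eq_Lprime_lam[OF _ assms(3)] mu_eq_lam_rev_compl by simp
qed

end
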